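(* Let $D$ be an integral domain of characteristic zero. Suppose that every $D$-algebra endomorphism of $A_1(D)$ is an automorphism of $A_1(D)$. Then for all $A,B,w\in A_1(D)$ with $[A,B]\in D^*$ and $[A,w]=0$, one has $w\in D[A]$.
   Context: For a commutative ring $R$, the first Weyl algebra $A_1(R)$ is the unital associative $R$-algebra generated by $X,Y$ subject to $[Y,X]=YX-XY=1$; it is a free $R$-module with basis $\{X^iY^j\}_{i,j\ge0}$. $[P,Q]=PQ-QP$. $D^*$ is the group of units of $D$. $D[A]$ denotes the $D$-subalgebra of $A_1(D)$ generated by $A$. *)

theory Defs
  imports Main "HOL-Library.Poly_Mapping"
begin

text \<open>Elements of the first Weyl algebra A_1(D): finitely supported coefficient
  families indexed by (i,j), representing sum of c_(i,j) X^i Y^j (normal ordered basis).\<close>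
type_synonym 'a weyl = "(nat \<times> nat) \<Rightarrow>\<^sub>0 'a"

text \<open>Multiplication, determined by YX = XY + 1:
  X^i Y^j * X^k Y^l = sum_t t! (j choose t) (k choose t) X^(i+k-t) Y^(j+l-t).\<close>
definition weyl_mult :: "'a::comm_ring_1 weyl \<Rightarrow> 'a weyl \<Rightarrow> 'a weyl" where
  "weyl_mult p q =
     (\<Sum>m\<in>Poly_Mapping.keys p. \<Sum>n\<in>Poly_Mapping.keys q. \<Sum>t\<le>min (snd m) (fst n).
        Poly_Mapping.single (fst m + fst n - t, snd m + snd n - t)
          (Poly_Mapping.lookup p m * Poly_Mapping.lookup q n * of_nat (fact t * (snd m choose t) * (fst n choose t))))"

definition weyl_const :: "'a::comm_ring_1 \<Rightarrow> 'a weyl" where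
  "weyl_const c = Poly_Mapping.single (0, 0) c"

definition weyl_X :: "'a::comm_ring_1 weyl" where
  "weyl_X = Poly_Mapping.single (1, 0) 1"

definition weyl_Y :: "'a::comm_ring_1 weyl" where
  "weyl_Y = Poly_Mapping.single (0, 1) 1"

definition weyl_comm :: "'a::comm_ring_1 weyl \<Rightarrow> 'a weyl \<Rightarrow> 'a weyl" where
  "weyl_comm p q = weyl_mult p q - weyl_mult q p"

definition weyl_endo :: "('a::comm_ring_1 weyl \<Rightarrow> 'a weyl) \<Rightarrow> bool" where
  "weyl_endo f \<longleftrightarrow>
     (\<forall>p q. f (p + q) = f p + f q) \<and>
     (\<forall>p q. f (weyl_mult p q) = weyl_mult (f p) (f q)) \<and>
     (\<forall>c p. f (weyl_mult (weyl_const c) p) = weyl_mult (weyl_const c) (f p)) \<and>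
     f (weyl_const 1) = weyl_const 1"

definition weyl_auto :: "('a::comm_ring_1 weyl \<Rightarrow> 'a weyl) \<Rightarrow> bool" where
  "weyl_auto f \<longleftrightarrow> weyl_endo f \<and> bij f"

inductive_set weyl_gen :: "'a::comm_ring_1 weyl \<Rightarrow> 'a weyl set" for a where
  const: "weyl_const c \<in> weyl_gen a"
| gen: "a \<in> weyl_gen a"
| add: "p \<in> weyl_gen a \<Longrightarrow> q \<in> weyl_gen a \<Longrightarrow> p + q \<in> weyl_gen a"
| mult: "p \<in> weyl_gen a \<Longrightarrow> q \<in> weyl_gen a \<Longrightarrow> weyl_mult p q \<in> weyl_gen a"

end

theory Submission
  imports Defs
begin

text \<open>Since [A,B] = c is a unit, X \<mapsto> A and Y \<mapsto> -c^-1 B respect the relation YX = XY + 1,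
  so they extend to an endomorphism F of A_1(D), which is an automorphism by hypothesis.
  Writing w = F u, injectivity of F turns [A,w] = 0 into [X,u] = 0. The coefficient of
  X^k Y^l in [X,u] is -(l+1) u_(k,l+1), so in characteristic zero u is a polynomial in X,
  and w = F u lies in D[F X] = D[A].

  The extension F comes from the universal property of A_1(D): for b a = a b + 1 in any
  D-algebra, evaluation of normal-ordered expressions is multiplicative. Evaluated at the
  left multiplications by X and Y, acting on A_1(D), it is an injective representation
  (the regular one); computations in A_1(D) are transported through it.\<close>

section \<open>Normal ordering\<close>

lemma normal_order_power:
  fixes a b :: "'r::ring_1"
  assumes ba: "b * a = a * b + 1"
  shows "b * a ^ k = a ^ k * b + of_nat k * a ^ (k - 1)"
proof (induction k)
  case 0 then show ?case by simp
next
  case (Suc k)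
  have "b * a ^ Suc k = (b * a ^ k) * a" by (simp only: power_Suc2 mult.assoc)
  also have "\<dots> = a ^ k * (b * a) + of_nat k * (a ^ (k - 1) * a)"
    using Suc by (simp add: algebra_simps)
  also have "of_nat k * (a ^ (k - 1) * a) = of_nat k * a ^ k"
    by (cases k) (auto simp: power_commutes)
  moreover have "a ^ k * (a * b) = a * (a ^ k * b)" by (metis mult.assoc power_commutes)
  ultimately show ?case using ba by (simp add: algebra_simps power_Suc2)
qed

lemma fact_binomial_Suc_Suc:
  "fact (Suc t) * (Suc j choose Suc t) * (k choose Suc t) =
   fact (Suc t) * (j choose Suc t) * (k choose Suc t) + fact t * (j choose t) * (k choose t) * (k - t)"
proof -
  have "fact (Suc t) * (Suc j choose Suc t) * (k choose Suc t) =
     fact (Suc t) * (j choose Suc t) * (k choose Suc t) + fact t * (j choose t) * (Suc t * (k choose Suc t))"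
    unfolding binomial_Suc_Suc fact_Suc by (simp add: algebra_simps)
  also have "Suc t * (k choose Suc t) = (k choose t) * (k - t)"
    by (metis binomial_absorption binomial_absorb_comp mult.commute)
  finally show ?thesis by (simp add: mult.assoc)
qed

lemma mult_of_nat_left_commute: "(b::'r::ring_1) * (of_nat n * x) = of_nat n * (b * x)"
  by (metis mult.assoc mult_of_nat_commute)

lemma normal_order_powers:
  fixes a b :: "'r::ring_1"
  assumes ba: "b * a = a * b + 1"
  shows "b ^ j * a ^ k =
    (\<Sum>t\<le>j. of_nat (fact t * (j choose t) * (k choose t)) * a ^ (k - t) * b ^ (j - t))"
proof (induction j)
  case 0 then show ?case by simp
next
  case (Suc j)
  define N where "N j t = fact t * (j choose t) * (k choose t)" for j t
  have IH: "b ^ j * a ^ k = (\<Sum>t\<le>j. of_nat (N j t) * a ^ (k - t) * b ^ (j - t))"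
    using Suc by (simp add: N_def)
  have "b ^ Suc j * a ^ k = b * (b ^ j * a ^ k)" by (simp add: mult.assoc)
  also have "\<dots> = (\<Sum>t\<le>j. of_nat (N j t) * ((b * a ^ (k - t)) * b ^ (j - t)))"
    unfolding IH sum_distrib_left
    by (rule sum.cong) (simp_all add: mult.assoc mult_of_nat_left_commute[of b])
  also have "\<dots> = (\<Sum>t\<le>j. of_nat (N j t) * a ^ (k - t) * b ^ (Suc j - t))
      + (\<Sum>t\<le>j. of_nat (N j t * (k - t)) * a ^ (k - Suc t) * b ^ (j - t))"
    unfolding sum.distrib[symmetric]
  proof (rule sum.cong)
    fix t assume "t \<in> {..j}"
    then have "b * b ^ (j - t) = b ^ (Suc j - t)" by (simp add: Suc_diff_le)
    then show "of_nat (N j t) * ((b * a ^ (k - t)) * b ^ (j - t)) =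
      of_nat (N j t) * a ^ (k - t) * b ^ (Suc j - t) + of_nat (N j t * (k - t)) * a ^ (k - Suc t) * b ^ (j - t)"
      by (simp add: normal_order_power[OF ba] distrib_left distrib_right mult.assoc)
  qed simp
  also have "\<dots> = (\<Sum>t\<le>Suc j. of_nat (N (Suc j) t) * a ^ (k - t) * b ^ (Suc j - t))"
  proof -
    have top_vanishes: "(\<Sum>t\<le>Suc j. of_nat (N j t) * a ^ (k - t) * b ^ (Suc j - t)) =
       (\<Sum>t\<le>j. of_nat (N j t) * a ^ (k - t) * b ^ (Suc j - t))"
      by (simp add: N_def binomial_eq_0)
    have shift: "(\<Sum>t\<le>Suc j. of_nat (if t = 0 then 0 else N j (t - 1) * (k - (t - 1))) *
          a ^ (k - t) * b ^ (Suc j - t) :: 'r) =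
       (\<Sum>t\<le>j. of_nat (N j t * (k - t)) * a ^ (k - Suc t) * b ^ (j - t))"
      by (subst sum.atMost_Suc_shift) simp
    have "N (Suc j) t = N j t + (if t = 0 then 0 else N j (t - 1) * (k - (t - 1)))" for t
      by (cases t) (simp add: N_def, simp only: N_def fact_binomial_Suc_Suc, simp)
    then show ?thesis
      by (simp only: of_nat_add distrib_right sum.distrib top_vanishes shift)
  qed
  finally show ?case by (simp add: N_def)
qed

section \<open>Evaluation of normal-ordered expressions\<close>

locale weyl_rep =
  fixes \<sigma> :: "'a::comm_ring_1 \<Rightarrow> 'r::ring_1" and a b :: 'r
  assumes \<sigma>_add: "\<sigma> (x + y) = \<sigma> x + \<sigma> y" and \<sigma>_mult: "\<sigma> (x * y) = \<sigma> x * \<sigma> y"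
    and \<sigma>_one: "\<sigma> 1 = 1" and \<sigma>_central: "\<sigma> x * r = r * \<sigma> x"
    and weyl_relation: "b * a = a * b + 1"
begin

lemma \<sigma>_zero: "\<sigma> 0 = 0"
  using \<sigma>_add[of 0 0] by simp

lemma \<sigma>_of_nat: "\<sigma> (of_nat n) = of_nat n"
  by (induction n) (simp_all add: \<sigma>_add \<sigma>_one \<sigma>_zero)

lemma \<sigma>_uminus: "\<sigma> (- x) = - \<sigma> x"
  using \<sigma>_add[of "-x" x] by (simp add: \<sigma>_zero eq_neg_iff_add_eq_0)

definition eval :: "'a weyl \<Rightarrow> 'r" where
  "eval p = (\<Sum>m\<in>Poly_Mapping.keys p. \<sigma> (Poly_Mapping.lookup p m) * a ^ fst m * b ^ snd m)"

lemma eval_superset: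
  assumes "finite S" "Poly_Mapping.keys p \<subseteq> S"
  shows "eval p = (\<Sum>m\<in>S. \<sigma> (Poly_Mapping.lookup p m) * a ^ fst m * b ^ snd m)"
  unfolding eval_def using assms
  by (intro sum.mono_neutral_left) (auto simp: \<sigma>_zero in_keys_iff)

lemma eval_add: "eval (p + q) = eval p + eval q"
proof -
  let ?S = "Poly_Mapping.keys p \<union> Poly_Mapping.keys q"
  have "eval (p + q) = (\<Sum>m\<in>?S. \<sigma> (Poly_Mapping.lookup (p + q) m) * a ^ fst m * b ^ snd m)"
    by (rule eval_superset) (auto simp: keys_add)
  also have "\<dots> = (\<Sum>m\<in>?S. \<sigma> (Poly_Mapping.lookup p m) * a ^ fst m * b ^ snd m)
     + (\<Sum>m\<in>?S. \<sigma> (Poly_Mapping.lookup q m) * a ^ fst m * b ^ snd m)"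
    by (simp add: lookup_add \<sigma>_add distrib_right sum.distrib)
  also have "\<dots> = eval p + eval q"
    by (simp add: eval_superset[symmetric])
  finally show ?thesis .
qed

lemma eval_zero: "eval 0 = 0"
  by (simp add: eval_def)

lemma eval_sum: "eval (sum f S) = (\<Sum>s\<in>S. eval (f s))"
  by (induction S rule: infinite_finite_induct) (simp_all add: eval_add eval_zero)

lemma eval_single: "eval (Poly_Mapping.single m v) = \<sigma> v * a ^ fst m * b ^ snd m"
  by (cases "v = 0") (simp_all add: eval_def \<sigma>_zero)

lemma eval_const: "eval (weyl_const c) = \<sigma> c"
  by (simp add: weyl_const_def eval_single)

lemma eval_diff: "eval (p - q) = eval p - eval q"
  using eval_add[of "p - q" q] by (simp add: eq_diff_eq)

lemma eval_monomial_mult: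
  "(\<Sum>t\<le>min j k. \<sigma> (x * y * of_nat (fact t * (j choose t) * (k choose t))) * a ^ (i + k - t) * b ^ (j + l - t))
   = (\<sigma> x * a ^ i * b ^ j) * (\<sigma> y * a ^ k * b ^ l)"
proof -
  define N where "N t = fact t * (j choose t) * (k choose t)" for t
  have N_vanishes: "N t = 0" if "k < t" for t
    using that by (simp add: N_def)
  have "(\<sigma> x * a ^ i * b ^ j) * (\<sigma> y * a ^ k * b ^ l) = \<sigma> x * ((a ^ i * b ^ j) * \<sigma> y) * a ^ k * b ^ l"
    by (simp add: mult.assoc)
  also have "(a ^ i * b ^ j) * \<sigma> y = \<sigma> y * (a ^ i * b ^ j)" by (rule \<sigma>_central[symmetric])
  also have "\<sigma> x * (\<sigma> y * (a ^ i * b ^ j)) * a ^ k * b ^ l = (\<sigma> x * \<sigma> y) * (a ^ i * (b ^ j * a ^ k) * b ^ l)"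
    by (simp add: mult.assoc)
  also have "\<dots> = (\<Sum>t\<le>j. (\<sigma> x * \<sigma> y) * (a ^ i * (of_nat (N t) * a ^ (k - t) * b ^ (j - t)) * b ^ l))"
    by (simp add: normal_order_powers[OF weyl_relation] N_def sum_distrib_left sum_distrib_right)
  also have "\<dots> = (\<Sum>t\<le>j. \<sigma> (x * y * of_nat (N t)) * a ^ (i + k - t) * b ^ (j + l - t))"
  proof (rule sum.cong)
    fix t assume "t \<in> {..j}"
    show "(\<sigma> x * \<sigma> y) * (a ^ i * (of_nat (N t) * a ^ (k - t) * b ^ (j - t)) * b ^ l) =
        \<sigma> (x * y * of_nat (N t)) * a ^ (i + k - t) * b ^ (j + l - t)"
    proof (cases "t \<le> k")
      case True
      have "a ^ i * (of_nat (N t) * a ^ (k - t) * b ^ (j - t)) * b ^ l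
          = of_nat (N t) * ((a ^ i * a ^ (k - t)) * (b ^ (j - t) * b ^ l))"
        by (simp add: mult.assoc mult_of_nat_left_commute)
      also have "a ^ i * a ^ (k - t) = a ^ (i + k - t)" using True by (simp add: power_add[symmetric])
      also have "b ^ (j - t) * b ^ l = b ^ (j + l - t)" using \<open>t \<in> {..j}\<close> by (simp add: power_add[symmetric])
      finally show ?thesis by (simp add: \<sigma>_mult \<sigma>_of_nat mult.assoc)
    qed (simp add: N_vanishes \<sigma>_zero)
  qed simp
  also have "\<dots> = (\<Sum>t\<le>min j k. \<sigma> (x * y * of_nat (N t)) * a ^ (i + k - t) * b ^ (j + l - t))"
    by (rule sum.mono_neutral_right)
      (auto, metis N_vanishes \<sigma>_zero not_le of_nat_0 mult_zero_left mult_zero_right)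
  finally show ?thesis by (simp add: N_def)
qed

lemma eval_mult: "eval (weyl_mult p q) = eval p * eval q"
proof -
  have "eval (weyl_mult p q) = (\<Sum>m\<in>Poly_Mapping.keys p. \<Sum>n\<in>Poly_Mapping.keys q.
      (\<sigma> (Poly_Mapping.lookup p m) * a ^ fst m * b ^ snd m) * (\<sigma> (Poly_Mapping.lookup q n) * a ^ fst n * b ^ snd n))"
    unfolding weyl_mult_def eval_sum eval_single fst_conv snd_conv eval_monomial_mult by (rule refl)
  also have "\<dots> = eval p * eval q" by (simp add: eval_def sum_product)
  finally show ?thesis .
qed

lemma eval_in_subring:
  assumes add: "\<And>x y. x \<in> S \<Longrightarrow> y \<in> S \<Longrightarrow> x + y \<in> S"
    and mult: "\<And>x y. x \<in> S \<Longrightarrow> y \<in> S \<Longrightarrow> x * y \<in> S"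
    and scalar: "\<And>c. \<sigma> c \<in> S" and "a \<in> S" "b \<in> S"
  shows "eval p \<in> S"
proof -
  have power: "x ^ n \<in> S" if "x \<in> S" for x n
    using that by (induction n) (metis \<sigma>_one scalar power_0, simp add: mult)
  have "sum f M \<in> S" if "\<And>m. m \<in> M \<Longrightarrow> f m \<in> S" for f and M :: "(nat \<times> nat) set"
    using that by (induction M rule: infinite_finite_induct) (metis \<sigma>_zero scalar sum.infinite,
        metis \<sigma>_zero scalar sum.empty, simp add: add)
  then show ?thesis
    unfolding eval_def using assms by (simp add: mult power)
qed

end

abbreviation weyl_smul :: "'a::comm_ring_1 \<Rightarrow> 'a weyl \<Rightarrow> 'a weyl" where
  "weyl_smul c p \<equiv> weyl_mult (weyl_const c) p"

lemma sum_when_unique: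
  assumes "finite S" "\<And>n. n \<in> S \<Longrightarrow> P n \<longleftrightarrow> n = z"
  shows "(\<Sum>n\<in>S. (f n when P n)) = (f z when z \<in> S)"
proof -
  have "(\<Sum>n\<in>S. (f n when P n)) = (\<Sum>n\<in>S. if n = z then f n else 0)"
    by (rule sum.cong) (auto simp: when_def assms(2))
  then show ?thesis by (simp add: when_def sum.delta[OF assms(1)])
qed

lemma lookup_when_in_keys: "(Poly_Mapping.lookup q n when n \<in> Poly_Mapping.keys q) = Poly_Mapping.lookup q n"
  by (simp add: when_def in_keys_iff)

lemma lookup_sum_single:
  "Poly_Mapping.lookup (\<Sum>n\<in>S. Poly_Mapping.single (g n) (h n)) x = (\<Sum>n\<in>S. (h n when g n = x))"
  by (simp add: lookup_sum lookup_single)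

lemma sum_monomials: "(\<Sum>m\<in>Poly_Mapping.keys p. Poly_Mapping.single m (Poly_Mapping.lookup p m)) = p"
  by (rule poly_mapping_eqI, unfold lookup_sum_single, subst sum_when_unique)
    (auto simp: lookup_when_in_keys)

lemma lookup_weyl_smul: "Poly_Mapping.lookup (weyl_smul c p) n = c * Poly_Mapping.lookup p n"
proof -
  have expand: "weyl_smul c p = (\<Sum>n\<in>Poly_Mapping.keys p. Poly_Mapping.single n (c * Poly_Mapping.lookup p n))"
    by (cases "c = 0") (simp_all add: weyl_mult_def weyl_const_def)
  show ?thesis
    unfolding expand lookup_sum_single
    by (subst sum_when_unique[where z = n]) (auto simp: when_def in_keys_iff)
qed

lemma weyl_smul_single: "weyl_smul c (Poly_Mapping.single m 1) = Poly_Mapping.single m c"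
  by (rule poly_mapping_eqI) (simp add: lookup_weyl_smul lookup_single when_def)

lemma lookup_weyl_mult_X_left:
  "Poly_Mapping.lookup (weyl_mult weyl_X q) (k, l) = (if k = 0 then 0 else Poly_Mapping.lookup q (k - 1, l))"
proof -
  have expand: "weyl_mult weyl_X q =
      (\<Sum>n\<in>Poly_Mapping.keys q. Poly_Mapping.single (Suc (fst n), snd n) (Poly_Mapping.lookup q n))"
    by (simp add: weyl_mult_def weyl_X_def)
  show ?thesis
  proof (cases k)
    case (Suc k')
    then show ?thesis unfolding expand lookup_sum_single
      by (subst sum_when_unique[where z = "(k', l)"]) (auto simp: lookup_when_in_keys)
  qed (simp add: expand lookup_sum_single when_def)
qed

lemma of_nat_nonzero_Suc: "(x::'a::comm_ring_1) * of_nat n \<noteq> 0 \<Longrightarrow> n = Suc (n - Suc 0)"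
  by (cases n) auto

lemma sum_atMost_min_Suc_0:
  "(\<Sum>t\<le>min (Suc 0) m. f t) = f 0 + (if m = 0 then 0 else f (Suc 0))"
  "(\<Sum>t\<le>min m (Suc 0). f t) = f 0 + (if m = 0 then 0 else f (Suc 0))"
  by (cases m; simp add: atMost_Suc add.commute)+

lemma lookup_weyl_mult_Y_left:
  "Poly_Mapping.lookup (weyl_mult weyl_Y q) (k, l) =
   (if l = 0 then 0 else Poly_Mapping.lookup q (k, l - 1)) + of_nat (Suc k) * Poly_Mapping.lookup q (Suc k, l)"
proof -
  have expand: "weyl_mult weyl_Y q =
      (\<Sum>n\<in>Poly_Mapping.keys q. Poly_Mapping.single (fst n, Suc (snd n)) (Poly_Mapping.lookup q n))
    + (\<Sum>n\<in>Poly_Mapping.keys q. Poly_Mapping.single (fst n - 1, snd n) (Poly_Mapping.lookup q n * of_nat (fst n)))"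
    by (simp add: weyl_mult_def weyl_Y_def sum_atMost_min_Suc_0 sum.distrib, rule sum.cong, auto)
  have shift: "(\<Sum>n\<in>Poly_Mapping.keys q. (Poly_Mapping.lookup q n when (fst n, Suc (snd n)) = (k, l)))
     = (if l = 0 then 0 else Poly_Mapping.lookup q (k, l - 1))"
  proof (cases l)
    case (Suc l')
    then show ?thesis
      by (subst sum_when_unique[where z = "(k, l')"]) (auto simp: lookup_when_in_keys)
  qed (simp add: when_def)
  have "(\<Sum>n\<in>Poly_Mapping.keys q. (Poly_Mapping.lookup q n * of_nat (fst n) when (fst n - 1, snd n) = (k, l)))
     = (\<Sum>n\<in>Poly_Mapping.keys q. ((Poly_Mapping.lookup q n * of_nat (fst n)) when n = (Suc k, l)))"
    by (rule sum.cong) (auto simp: when_def intro: of_nat_nonzero_Suc)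
  also have "\<dots> = of_nat (Suc k) * Poly_Mapping.lookup q (Suc k, l)"
    by (subst sum_when_unique[where z = "(Suc k, l)"]) (auto simp: when_def in_keys_iff mult.commute)
  finally show ?thesis unfolding expand lookup_add lookup_sum_single shift by simp
qed

lemma lookup_weyl_mult_X_right:
  "Poly_Mapping.lookup (weyl_mult q weyl_X) (k, l) =
   (if k = 0 then 0 else Poly_Mapping.lookup q (k - 1, l)) + of_nat (Suc l) * Poly_Mapping.lookup q (k, Suc l)"
proof -
  have expand: "weyl_mult q weyl_X =
      (\<Sum>n\<in>Poly_Mapping.keys q. Poly_Mapping.single (Suc (fst n), snd n) (Poly_Mapping.lookup q n))
    + (\<Sum>n\<in>Poly_Mapping.keys q. Poly_Mapping.single (fst n, snd n - 1) (Poly_Mapping.lookup q n * of_nat (snd n)))"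
    by (simp add: weyl_mult_def weyl_X_def sum_atMost_min_Suc_0 sum.distrib, rule sum.cong, auto)
  have shift: "(\<Sum>n\<in>Poly_Mapping.keys q. (Poly_Mapping.lookup q n when (Suc (fst n), snd n) = (k, l)))
     = (if k = 0 then 0 else Poly_Mapping.lookup q (k - 1, l))"
  proof (cases k)
    case (Suc k')
    then show ?thesis
      by (subst sum_when_unique[where z = "(k', l)"]) (auto simp: lookup_when_in_keys)
  qed (simp add: when_def)
  have "(\<Sum>n\<in>Poly_Mapping.keys q. (Poly_Mapping.lookup q n * of_nat (snd n) when (fst n, snd n - 1) = (k, l)))
     = (\<Sum>n\<in>Poly_Mapping.keys q. ((Poly_Mapping.lookup q n * of_nat (snd n)) when n = (k, Suc l)))"
    by (rule sum.cong) (auto simp: when_def intro: of_nat_nonzero_Suc)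
  also have "\<dots> = of_nat (Suc l) * Poly_Mapping.lookup q (k, Suc l)"
    by (subst sum_when_unique[where z = "(k, Suc l)"]) (auto simp: when_def in_keys_iff mult.commute)
  finally show ?thesis unfolding expand lookup_add lookup_sum_single shift by simp
qed

lemma weyl_mult_X_single:
  "weyl_mult weyl_X (Poly_Mapping.single (i, j) c) = Poly_Mapping.single (Suc i, j) c"
proof (rule poly_mapping_eqI)
  fix n :: "nat \<times> nat"
  show "Poly_Mapping.lookup (weyl_mult weyl_X (Poly_Mapping.single (i, j) c)) n =
      Poly_Mapping.lookup (Poly_Mapping.single (Suc i, j) c) n"
    by (cases n) (auto simp: lookup_weyl_mult_X_left lookup_single when_def)
qed

lemma weyl_mult_Y_single:
  "weyl_mult weyl_Y (Poly_Mapping.single (0, j) c) = Poly_Mapping.single (0, Suc j) c"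
proof (rule poly_mapping_eqI)
  fix n :: "nat \<times> nat"
  show "Poly_Mapping.lookup (weyl_mult weyl_Y (Poly_Mapping.single (0, j) c)) n =
      Poly_Mapping.lookup (Poly_Mapping.single (0, Suc j) c) n"
    by (cases n) (auto simp: lookup_weyl_mult_Y_left lookup_single when_def)
qed

lemma weyl_smul_add: "weyl_smul c (p + q) = weyl_smul c p + weyl_smul c q"
  by (rule poly_mapping_eqI) (simp add: lookup_weyl_smul lookup_add algebra_simps)

lemma weyl_smul_uminus: "weyl_smul c (- p) = - weyl_smul c p"
  by (rule poly_mapping_eqI) (simp add: lookup_weyl_smul)

lemma weyl_smul_diff: "weyl_smul c (p - q) = weyl_smul c p - weyl_smul c q"
  by (rule poly_mapping_eqI) (simp add: lookup_weyl_smul lookup_minus algebra_simps)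

lemma weyl_smul_zero: "weyl_smul c 0 = 0"
  by (rule poly_mapping_eqI) (simp add: lookup_weyl_smul)

lemma weyl_smul_smul: "weyl_smul c (weyl_smul d p) = weyl_smul (c * d) p"
  by (rule poly_mapping_eqI) (simp add: lookup_weyl_smul)

lemma weyl_smul_one: "weyl_smul 1 p = p"
  by (rule poly_mapping_eqI) (simp add: lookup_weyl_smul)

lemma weyl_smul_add_left: "weyl_smul (c + d) p = weyl_smul c p + weyl_smul d p"
  by (rule poly_mapping_eqI) (simp add: lookup_weyl_smul lookup_add algebra_simps)

section \<open>The regular representation\<close>

text \<open>D-linearity is imposed so that the scalar operators are central in this ring.\<close>

typedef (overloaded) ('a::comm_ring_1) weyl_linop =
  "{f :: 'a weyl \<Rightarrow> 'a weyl. (\<forall>p q. f (p + q) = f p + f q) \<and> (\<forall>c p. f (weyl_smul c p) = weyl_smul c (f p))}"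
  morphisms linop_apply Abs_linop
  by (rule exI[of _ id]) auto

setup_lifting type_definition_weyl_linop

instantiation weyl_linop :: (comm_ring_1) ring_1
begin
lift_definition zero_weyl_linop :: "'a weyl_linop" is "\<lambda>_. 0" by (simp add: weyl_smul_zero)
lift_definition one_weyl_linop :: "'a weyl_linop" is "id" by simp
lift_definition plus_weyl_linop :: "'a weyl_linop \<Rightarrow> 'a weyl_linop \<Rightarrow> 'a weyl_linop" is "\<lambda>f g x. f x + g x"
  by (simp add: weyl_smul_add algebra_simps)
lift_definition uminus_weyl_linop :: "'a weyl_linop \<Rightarrow> 'a weyl_linop" is "\<lambda>f x. - f x"
  by (simp add: weyl_smul_uminus algebra_simps)
lift_definition minus_weyl_linop :: "'a weyl_linop \<Rightarrow> 'a weyl_linop \<Rightarrow> 'a weyl_linop" is "\<lambda>f g x. f x - g x"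
  by (simp add: weyl_smul_diff algebra_simps)
lift_definition times_weyl_linop :: "'a weyl_linop \<Rightarrow> 'a weyl_linop \<Rightarrow> 'a weyl_linop" is "\<lambda>f g x. f (g x)"
  by simp
instance
proof
  fix x y z :: "'a weyl_linop"
  show "x * y * z = x * (y * z)" by transfer auto
  show "x + y + z = x + (y + z)" by transfer (auto simp: algebra_simps)
  show "x + y = y + x" by transfer (auto simp: algebra_simps)
  show "0 + x = x" by transfer auto
  show "- x + x = 0" by transfer auto
  show "x - y = x + - y" by transfer auto
  show "1 * x = x" by transfer auto
  show "x * 1 = x" by transfer auto
  show "(x + y) * z = x * z + y * z" by transfer auto
  show "x * (y + z) = x * y + x * z" by transfer auto
next
  show "(0::'a weyl_linop) \<noteq> 1"
  proof transfer
    have "(weyl_const 1 :: 'a weyl) \<noteq> 0"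
      by (metis lookup_single_eq lookup_zero weyl_const_def zero_neq_one)
    then show "(\<lambda>_. 0::'a weyl) \<noteq> id" by (metis id_apply)
  qed
qed
end

lemma linop_apply_times: "linop_apply (f * g) x = linop_apply f (linop_apply g x)"
  by (simp add: times_weyl_linop.rep_eq)

lemma linop_apply_plus: "linop_apply (f + g) x = linop_apply f x + linop_apply g x"
  by (simp add: plus_weyl_linop.rep_eq)

lemma linop_apply_zero: "linop_apply 0 x = 0"
  by (simp add: zero_weyl_linop.rep_eq)

lemma linop_apply_power: "linop_apply (f ^ n) x = (linop_apply f ^^ n) x"
  by (induction n arbitrary: x) (simp_all add: one_weyl_linop.rep_eq linop_apply_times)

lemma linop_apply_sum: "linop_apply (sum f S) x = (\<Sum>s\<in>S. linop_apply (f s) x)"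
  by (induction S rule: infinite_finite_induct) (simp_all add: linop_apply_zero linop_apply_plus)

lift_definition scalar_op :: "'a::comm_ring_1 \<Rightarrow> 'a weyl_linop" is weyl_smul
  by (simp add: weyl_smul_add weyl_smul_smul mult.commute)

lift_definition mult_X_op :: "'a::comm_ring_1 weyl_linop" is "weyl_mult weyl_X"
proof (intro conjI allI)
  fix p q :: "'a weyl" and c
  show "weyl_mult weyl_X (p + q) = weyl_mult weyl_X p + weyl_mult weyl_X q"
    by (rule poly_mapping_eqI) (auto simp: lookup_weyl_mult_X_left lookup_add)
  show "weyl_mult weyl_X (weyl_smul c p) = weyl_smul c (weyl_mult weyl_X p)"
    by (rule poly_mapping_eqI) (auto simp: lookup_weyl_mult_X_left lookup_weyl_smul)
qed

lift_definition mult_Y_op :: "'a::comm_ring_1 weyl_linop" is "weyl_mult weyl_Y"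
proof (intro conjI allI)
  fix p q :: "'a weyl" and c
  show "weyl_mult weyl_Y (p + q) = weyl_mult weyl_Y p + weyl_mult weyl_Y q"
    by (rule poly_mapping_eqI) (auto simp: lookup_weyl_mult_Y_left lookup_add algebra_simps)
  show "weyl_mult weyl_Y (weyl_smul c p) = weyl_smul c (weyl_mult weyl_Y p)"
    by (rule poly_mapping_eqI) (auto simp: lookup_weyl_mult_Y_left lookup_weyl_smul algebra_simps)
qed

lemma mult_Y_X_op: "mult_Y_op * mult_X_op = mult_X_op * mult_Y_op + (1 :: 'a::comm_ring_1 weyl_linop)"
proof (transfer, rule ext, rule poly_mapping_eqI)
  fix q :: "'a weyl" and n :: "nat \<times> nat"
  obtain k l where n: "n = (k, l)" by fastforce
  show "Poly_Mapping.lookup (weyl_mult weyl_Y (weyl_mult weyl_X q)) n =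
        Poly_Mapping.lookup (weyl_mult weyl_X (weyl_mult weyl_Y q) + id q) n"
    unfolding n
    by (cases k) (auto simp: lookup_weyl_mult_X_left lookup_weyl_mult_Y_left lookup_add algebra_simps)
qed

interpretation regular: weyl_rep scalar_op mult_X_op mult_Y_op
proof
  fix x y :: 'a and r :: "'a weyl_linop"
  show "scalar_op (x + y) = scalar_op x + scalar_op y"
    by transfer (simp add: weyl_smul_add_left fun_eq_iff)
  show "scalar_op (x * y) = scalar_op x * scalar_op y"
    by transfer (simp add: weyl_smul_smul fun_eq_iff)
  show "scalar_op 1 = (1 :: 'a weyl_linop)"
    by transfer (simp add: weyl_smul_one fun_eq_iff)
  show "scalar_op x * r = r * scalar_op x"
    by transfer auto
  show "mult_Y_op * mult_X_op = mult_X_op * mult_Y_op + (1 :: 'a weyl_linop)"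
    by (rule mult_Y_X_op)
qed

abbreviation regular_rep :: "'a::comm_ring_1 weyl \<Rightarrow> 'a weyl_linop" where
  "regular_rep \<equiv> weyl_rep.eval scalar_op mult_X_op mult_Y_op"

lemma regular_rep_apply_one: "linop_apply (regular_rep p) (weyl_const 1) = p"
proof -
  have Y_powers: "(linop_apply mult_Y_op ^^ j) (weyl_const 1) = Poly_Mapping.single (0, j) (1::'a)" for j
    by (induction j) (simp_all add: weyl_const_def mult_Y_op.rep_eq weyl_mult_Y_single)
  have X_powers: "(linop_apply mult_X_op ^^ i) (Poly_Mapping.single (0, j) c) =
      Poly_Mapping.single (i, j) (c::'a)" for i j c
    by (induction i) (simp_all add: mult_X_op.rep_eq weyl_mult_X_single)
  have "linop_apply (regular_rep p) (weyl_const 1) =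
     (\<Sum>m\<in>Poly_Mapping.keys p. Poly_Mapping.single m (Poly_Mapping.lookup p m))"
    unfolding regular.eval_def linop_apply_sum
    by (rule sum.cong) (auto simp: linop_apply_times linop_apply_power scalar_op.rep_eq
        Y_powers X_powers weyl_smul_single)
  then show ?thesis by (simp add: sum_monomials)
qed

lemma inj_regular_rep: "inj (regular_rep :: 'a::comm_ring_1 weyl \<Rightarrow> _)"
  by (metis injI regular_rep_apply_one)

section \<open>Endomorphisms from canonical pairs\<close>

lemma weyl_comm_smul_left:
  assumes "weyl_comm A B = weyl_const c"
  shows "weyl_comm (weyl_smul e B) A = weyl_const (- (e * c))"
proof (rule injD[OF inj_regular_rep])
  have AB: "regular_rep A * regular_rep B - regular_rep B * regular_rep A = scalar_op c"
    using arg_cong[OF assms, of regular_rep]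
    by (simp add: weyl_comm_def regular.eval_diff regular.eval_mult regular.eval_const)
  have "regular_rep (weyl_comm (weyl_smul e B) A) =
      scalar_op e * regular_rep B * regular_rep A - regular_rep A * (scalar_op e * regular_rep B)"
    by (simp add: weyl_comm_def regular.eval_diff regular.eval_mult regular.eval_const)
  also have "\<dots> = scalar_op e * (regular_rep B * regular_rep A - regular_rep A * regular_rep B)"
    by (simp add: right_diff_distrib mult.assoc) (metis mult.assoc regular.\<sigma>_central)
  also have "\<dots> = scalar_op (- (e * c))"
    by (metis AB minus_diff_eq mult_minus_right regular.\<sigma>_mult regular.\<sigma>_uminus)
  finally show "regular_rep (weyl_comm (weyl_smul e B) A) = regular_rep (weyl_const (- (e * c)))"
    by (simp add: regular.eval_const)
qed

lemma weyl_endo_of_canonical_pair: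
  assumes "weyl_comm B A = weyl_const 1"
  obtains F where "weyl_endo F" "F weyl_X = A" "F weyl_Y = B"
proof -
  have "regular_rep B * regular_rep A - regular_rep A * regular_rep B = 1"
    using arg_cong[OF assms, of regular_rep]
    by (simp add: weyl_comm_def regular.eval_diff regular.eval_mult regular.eval_const regular.\<sigma>_one)
  then have relation: "regular_rep B * regular_rep A = regular_rep A * regular_rep B + 1"
    by (simp add: diff_eq_eq add.commute)
  interpret P: weyl_rep scalar_op "regular_rep A" "regular_rep B"
    by unfold_locales (rule regular.\<sigma>_add regular.\<sigma>_mult regular.\<sigma>_one regular.\<sigma>_central relation)+
  define F where "F = inv regular_rep \<circ> P.eval"
  have "P.eval p \<in> range regular_rep" for p
  proof (rule P.eval_in_subring)
    fix x y :: "'a weyl_linop"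
    assume "x \<in> range regular_rep" "y \<in> range regular_rep"
    then show "x + y \<in> range regular_rep" "x * y \<in> range regular_rep"
      by (auto simp flip: regular.eval_add regular.eval_mult)
  qed (auto simp flip: regular.eval_const)
  then have rep_F: "regular_rep (F p) = P.eval p" for p
    by (simp add: F_def f_inv_into_f)
  have F_eqI: "F p = q" if "P.eval p = regular_rep q" for p q
    using that rep_F by (metis inj_regular_rep injD)
  show ?thesis
  proof
    show "weyl_endo F"
      unfolding weyl_endo_def
      by (intro conjI allI F_eqI)
        (simp_all add: P.eval_add P.eval_mult P.eval_const regular.eval_add regular.eval_mult
          regular.eval_const rep_F)
    show "F weyl_X = A" "F weyl_Y = B"
      by (auto intro!: F_eqI simp: weyl_X_def weyl_Y_def P.eval_single regular.\<sigma>_one)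
  qed
qed

section \<open>Centralizer of X and generated subalgebras\<close>

lemma weyl_endo_zero: "weyl_endo F \<Longrightarrow> F 0 = 0"
  unfolding weyl_endo_def by (metis add_cancel_right_right)

lemma weyl_endo_diff: "weyl_endo F \<Longrightarrow> F (p - q) = F p - F q"
  unfolding weyl_endo_def by (metis add_diff_cancel diff_add_cancel)

lemma weyl_endo_comm: "weyl_endo F \<Longrightarrow> F (weyl_comm p q) = weyl_comm (F p) (F q)"
  unfolding weyl_comm_def by (simp add: weyl_endo_diff) (simp add: weyl_endo_def)

lemma weyl_endo_const: "weyl_endo F \<Longrightarrow> F (weyl_const c) = weyl_const c"
  using weyl_smul_single[of c "(0, 0)"] unfolding weyl_endo_def weyl_const_def by metis

lemma weyl_endo_weyl_gen:
  assumes "weyl_endo F" "p \<in> weyl_gen a"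
  shows "F p \<in> weyl_gen (F a)"
  using assms(2)
proof induction
  case (const c)
  then show ?case using weyl_endo_const[OF assms(1)] by (metis weyl_gen.const)
qed (use assms(1) in \<open>auto simp: weyl_endo_def intro: weyl_gen.intros\<close>)

lemma weyl_gen_zero: "0 \<in> weyl_gen a"
  by (metis single_zero weyl_const_def weyl_gen.const)

lemma weyl_gen_sum: "(\<And>s. s \<in> S \<Longrightarrow> g s \<in> weyl_gen a) \<Longrightarrow> sum g S \<in> weyl_gen a"
  by (induction S rule: infinite_finite_induct) (simp_all add: weyl_gen_zero weyl_gen.add)

lemma weyl_centralizer_X:
  fixes u :: "'a::{idom, ring_char_0} weyl"
  assumes "weyl_comm weyl_X u = 0"
  shows "u \<in> weyl_gen weyl_X"
proof -
  have "Poly_Mapping.lookup (weyl_comm weyl_X u) (k, l) = 0" for k l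
    using assms by simp
  then have "of_nat (Suc l) * Poly_Mapping.lookup u (k, Suc l) = 0" for k l
    by (simp add: weyl_comm_def lookup_minus lookup_weyl_mult_X_left lookup_weyl_mult_X_right)
  then have no_Y: "Poly_Mapping.lookup u (k, Suc l) = 0" for k l
    by (simp del: of_nat_Suc)
  have X_powers: "Poly_Mapping.single (i, 0) 1 \<in> weyl_gen weyl_X" for i
    by (induction i) (metis weyl_const_def weyl_gen.const,
        metis weyl_mult_X_single weyl_gen.gen weyl_gen.mult)
  have "(\<Sum>m\<in>Poly_Mapping.keys u. Poly_Mapping.single m (Poly_Mapping.lookup u m)) \<in> weyl_gen weyl_X"
  proof (rule weyl_gen_sum)
    fix m assume "m \<in> Poly_Mapping.keys u"
    then have "m = (fst m, 0)" using no_Y by (metis in_keys_iff not0_implies_Suc prod.collapse)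
    then show "Poly_Mapping.single m (Poly_Mapping.lookup u m) \<in> weyl_gen weyl_X"
      by (metis X_powers weyl_smul_single weyl_gen.const weyl_gen.mult)
  qed
  then show ?thesis by (simp add: sum_monomials)
qed

theorem theorem4p8:
  fixes A B w :: "'a::{idom, ring_char_0} weyl"
  assumes "\<forall>f :: 'a weyl \<Rightarrow> 'a weyl. weyl_endo f \<longrightarrow> weyl_auto f"
    and "\<exists>c. c dvd (1::'a) \<and> weyl_comm A B = weyl_const c"
    and "weyl_comm A w = 0"
  shows "w \<in> weyl_gen A"
proof -
  obtain c d where "weyl_comm A B = weyl_const c" and "d * c = (1::'a)"
    using assms(2) by (metis dvdE mult.commute)
  then have "weyl_comm (weyl_smul (- d) B) A = weyl_const 1"
    by (simp add: weyl_comm_smul_left)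
  then obtain F where F: "weyl_endo F" "F weyl_X = A"
    by (rule weyl_endo_of_canonical_pair)
  then have "bij F" using assms(1) by (simp add: weyl_auto_def)
  then obtain u where u: "w = F u" by (metis bij_pointE)
  have "F (weyl_comm weyl_X u) = F 0"
    using F assms(3) u by (simp add: weyl_endo_comm weyl_endo_zero)
  then have "weyl_comm weyl_X u = 0"
    using \<open>bij F\<close> by (simp add: bij_def inj_eq)
  then have "u \<in> weyl_gen weyl_X" by (rule weyl_centralizer_X)
  then show ?thesis
    using F u by (metis weyl_endo_weyl_gen)
qed

end
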